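(* Let $L \ge N$, let $\mathbf{T} \in \mathbb{R}^{L\times N}$ have full rank $N$, and let $\gamma>0$. Define $H:\mathbb{R}^N\rightrightarrows\mathbb{R}^N$ by $\mathbf{y}\in H(\mathbf{x})$ if and only if $\mathbf{x} = \mathbf{T}^{\dagger}S_\gamma\mathbf{T}(\mathbf{x}+\mathbf{y})$. Then for $\mathbf{y}\in\mathbb{R}^N$ we have $\mathbf{y}\in H(\mathbf{0})$ if and only if $\|\mathbf{T}\mathbf{y}\|_\infty \le \gamma$, where $\|\mathbf{T}\mathbf{y}\|_\infty = \max_{1\le j\le L}|[\mathbf{T}\mathbf{y}]_j|$.
   Context: $\mathbf{T}^*$ is the transpose, $\mathbf{T}^{\dagger}=(\mathbf{T}^*\mathbf{T})^{-1}\mathbf{T}^*$ the Moore–Penrose inverse. $S_\gamma:\mathbb{R}^L\to\mathbb{R}^L$ is componentwise soft shrinkage: $[S_\gamma(\mathbf{y})]_j = y_j-\gamma$ if $y_j\ge\gamma$, $y_j+\gamma$ if $y_j\le-\gamma$, $0$ if $|y_j|<\gamma$. *)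

theory Defs
  imports "HOL-Analysis.Analysis"
begin

definition soft_shrink :: "real \<Rightarrow> real ^ 'l \<Rightarrow> real ^ 'l" where
  "soft_shrink \<gamma> y = (\<chi> j. if y $ j \<ge> \<gamma> then y $ j - \<gamma>
                           else if y $ j \<le> - \<gamma> then y $ j + \<gamma> else 0)"

definition pinv :: "real ^ 'n ^ 'l \<Rightarrow> real ^ 'l ^ 'n" where
  "pinv T = matrix_inv (transpose T ** T) ** transpose T"

definition H_op :: "real ^ 'n ^ 'l \<Rightarrow> real \<Rightarrow> real ^ 'n \<Rightarrow> (real ^ 'n) set" where
  "H_op T \<gamma> x = {y. x = pinv T *v soft_shrink \<gamma> (T *v (x + y))}"

definition linf_norm :: "real ^ 'l \<Rightarrow> real" where
  "linf_norm v = Max (range (\<lambda>j. \<bar>v $ j\<bar>))"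

end

theory Submission
  imports Defs
begin

text \<open>Since \<open>T\<^sup>\<dagger> = (T\<^sup>* T)\<^sup>-\<^sup>1 T\<^sup>*\<close> with \<open>T\<^sup>* T\<close> invertible, \<open>y \<in> H(0)\<close> means
  \<open>T\<^sup>* S\<^sub>\<gamma>(T y) = 0\<close>. Pairing this with \<open>y\<close> gives \<open>\<langle>T y, S\<^sub>\<gamma>(T y)\<rangle> = 0\<close>; but
  \<open>v\<^sub>j [S\<^sub>\<gamma> v]\<^sub>j \<ge> 0\<close> for every \<open>j\<close>, with equality only if \<open>[S\<^sub>\<gamma> v]\<^sub>j = 0\<close>, so
  \<open>S\<^sub>\<gamma>(T y) = 0\<close>, which is exactly \<open>\<parallel>T y\<parallel>\<^sub>\<infinity> \<le> \<gamma>\<close>.\<close>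

lemma matrix_inv_right:
  fixes A :: "'a::semiring_1^'n^'m"
  assumes "invertible A"
  shows "A ** matrix_inv A = mat 1"
  using assms unfolding invertible_def matrix_inv_def by (rule someI_ex [THEN conjunct1])

lemma invertible_transpose_mult_self:
  fixes T :: "real^'n^'m"
  assumes "inj ((*v) T)"
  shows "invertible (transpose T ** T)"
proof -
  have "x = 0" if "(transpose T ** T) *v x = 0" for x
  proof -
    have "(T *v x) \<bullet> (T *v x) = x \<bullet> ((transpose T ** T) *v x)"
      by (metis dot_lmul_matrix vector_transpose_matrix matrix_vector_mul_assoc)
    then have "T *v x = 0"
      using that by simp
    then show "x = 0"
      using assms by (metis inj_eq matrix_vector_mult_0_right)
  qed
  then show ?thesis
    by (simp add: invertible_left_inverse matrix_left_invertible_ker)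
qed

lemma pinv_mult_eq_0_iff:
  fixes T :: "real^'n^'l"
  assumes "rank T = CARD('n)"
  shows "pinv T *v s = 0 \<longleftrightarrow> transpose T *v s = 0"
proof
  let ?G = "transpose T ** T"
  assume "pinv T *v s = 0"
  then have "(?G ** matrix_inv ?G) *v (transpose T *v s) = 0"
    by (simp add: pinv_def matrix_vector_mul_assoc [symmetric])
  moreover have "?G ** matrix_inv ?G = mat 1"
    using assms by (simp add: full_rank_injective invertible_transpose_mult_self matrix_inv_right)
  ultimately show "transpose T *v s = 0"
    by simp
qed (simp add: pinv_def matrix_vector_mul_assoc [symmetric])

lemma mult_soft_shrink_nonneg:
  assumes "\<gamma> \<ge> 0"
  shows "0 \<le> v $ j * soft_shrink \<gamma> v $ j"
  using assms by (auto simp: soft_shrink_def intro: mult_nonneg_nonneg mult_nonpos_nonpos)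

lemma mult_soft_shrink_eq_0_iff:
  assumes "\<gamma> \<ge> 0"
  shows "v $ j * soft_shrink \<gamma> v $ j = 0 \<longleftrightarrow> soft_shrink \<gamma> v $ j = 0"
  using assms by (auto simp: soft_shrink_def)

lemma inner_soft_shrink_eq_0_iff:
  assumes "\<gamma> \<ge> 0"
  shows "v \<bullet> soft_shrink \<gamma> v = 0 \<longleftrightarrow> soft_shrink \<gamma> v = 0"
proof -
  have "v \<bullet> soft_shrink \<gamma> v = 0 \<longleftrightarrow> (\<forall>j. v $ j * soft_shrink \<gamma> v $ j = 0)"
    unfolding inner_vec_def using assms
    by (simp add: sum_nonneg_eq_0_iff mult_soft_shrink_nonneg del: mult_eq_0_iff)
  also have "\<dots> \<longleftrightarrow> soft_shrink \<gamma> v = 0"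
    using mult_soft_shrink_eq_0_iff [OF assms] by (metis vec_eq_iff zero_index)
  finally show ?thesis .
qed

lemma transpose_mult_soft_shrink_eq_0_iff:
  fixes T :: "real^'n^'l"
  assumes "\<gamma> \<ge> 0"
  shows "transpose T *v soft_shrink \<gamma> (T *v y) = 0 \<longleftrightarrow> soft_shrink \<gamma> (T *v y) = 0"
proof
  assume "transpose T *v soft_shrink \<gamma> (T *v y) = 0"
  then have "(T *v y) \<bullet> soft_shrink \<gamma> (T *v y) = 0"
    by (metis dot_lmul_matrix vector_transpose_matrix inner_zero_right)
  then show "soft_shrink \<gamma> (T *v y) = 0"
    using assms by (simp add: inner_soft_shrink_eq_0_iff)
qed simp

lemma soft_shrink_component_eq_0_iff:
  assumes "\<gamma> \<ge> 0"
  shows "soft_shrink \<gamma> v $ j = 0 \<longleftrightarrow> \<bar>v $ j\<bar> \<le> \<gamma>"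
  using assms by (auto simp: soft_shrink_def)

lemma soft_shrink_eq_0_iff:
  assumes "\<gamma> \<ge> 0"
  shows "soft_shrink \<gamma> v = 0 \<longleftrightarrow> (\<forall>j. \<bar>v $ j\<bar> \<le> \<gamma>)"
  using assms by (simp add: vec_eq_iff soft_shrink_component_eq_0_iff)

lemma linf_norm_le_iff: "linf_norm v \<le> c \<longleftrightarrow> (\<forall>j. \<bar>v $ j\<bar> \<le> c)"
  by (simp add: linf_norm_def)

theorem theorem2p6:
  fixes T :: "real ^ 'n ^ 'l" and \<gamma> :: real and y :: "real ^ 'n"
  assumes "CARD('l) \<ge> CARD('n)"
    and "rank T = CARD('n)"
    and "\<gamma> > 0"
  shows "y \<in> H_op T \<gamma> 0 \<longleftrightarrow> linf_norm (T *v y) \<le> \<gamma>"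
proof -
  have "y \<in> H_op T \<gamma> 0 \<longleftrightarrow> pinv T *v soft_shrink \<gamma> (T *v y) = 0"
    by (auto simp: H_op_def)
  also have "\<dots> \<longleftrightarrow> transpose T *v soft_shrink \<gamma> (T *v y) = 0"
    using assms(2) by (rule pinv_mult_eq_0_iff)
  also have "\<dots> \<longleftrightarrow> soft_shrink \<gamma> (T *v y) = 0"
    using assms(3) by (intro transpose_mult_soft_shrink_eq_0_iff) simp
  also have "\<dots> \<longleftrightarrow> linf_norm (T *v y) \<le> \<gamma>"
    using assms(3) by (simp add: soft_shrink_eq_0_iff linf_norm_le_iff)
  finally show ?thesis .
qed

end
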